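(* Let $G$ be a generator matrix on the discrete space $\mathcal X$, let $\theta>0$ and let $M\ge1$ be an integer such that $Q:=I+G/\theta$ and $I+G/M$ are entrywise non-negative. Let $K_n=I+\frac Gn\mathbb 1(n>M)$ for $n\ge1$. Let $\pi$ be a probability vector and $\mu$ a stationary distribution of $Q$ such that $\pi^tQ^n\to\mu^t$ entrywise. Then, with $(\mu^n)^t:=\pi^t\prod_{i=1}^nK_i$, as $n\to\infty$ both (a) $(\mu^n)^t\to\mu^t$ and (b) $(\mu^n)^tQ\to\mu^t$ hold entrywise.
   Context: A generator matrix on $\mathcal X$: $G_{i,j}\ge0$ for $i\ne j$, $G_{i,i}=-\sum_{j\ne i}G_{i,j}$, and $\sup_i|G_{i,i}|<\infty$. *)

theory Defs
  imports "HOL-Analysis.Analysis"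
begin

definition mat_id :: "'a \<Rightarrow> 'a \<Rightarrow> real" where
  "mat_id i j = (if i = j then 1 else 0)"

definition vecmat :: "('a \<Rightarrow> real) \<Rightarrow> ('a \<Rightarrow> 'a \<Rightarrow> real) \<Rightarrow> 'a \<Rightarrow> real" where
  "vecmat v A = (\<lambda>j. \<Sum>\<^sub>\<infinity>i. v i * A i j)"

definition generator_matrix :: "('a \<Rightarrow> 'a \<Rightarrow> real) \<Rightarrow> bool" where
  "generator_matrix G \<longleftrightarrow>
     (\<forall>i j. i \<noteq> j \<longrightarrow> 0 \<le> G i j) \<and>
     (\<forall>i. (\<lambda>j. G i j) summable_on (UNIV - {i}) \<and>
          G i i = - (\<Sum>\<^sub>\<infinity>j\<in>UNIV - {i}. G i j)) \<and>
     (\<exists>C. \<forall>i. \<bar>G i i\<bar> \<le> C)"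

definition prob_vector :: "('a \<Rightarrow> real) \<Rightarrow> bool" where
  "prob_vector p \<longleftrightarrow> (\<forall>i. 0 \<le> p i) \<and> p summable_on UNIV \<and> (\<Sum>\<^sub>\<infinity>i. p i) = 1"

definition entrywise_nonneg :: "('a \<Rightarrow> 'a \<Rightarrow> real) \<Rightarrow> bool" where
  "entrywise_nonneg A \<longleftrightarrow> (\<forall>i j. 0 \<le> A i j)"

definition Kmat :: "('a \<Rightarrow> 'a \<Rightarrow> real) \<Rightarrow> nat \<Rightarrow> nat \<Rightarrow> 'a \<Rightarrow> 'a \<Rightarrow> real" where
  "Kmat G M n = (\<lambda>i j. mat_id i j + (if n > M then G i j / real n else 0))"

primrec mu_seq :: "('a \<Rightarrow> 'a \<Rightarrow> real) \<Rightarrow> nat \<Rightarrow> ('a \<Rightarrow> real) \<Rightarrow> nat \<Rightarrow> 'a \<Rightarrow> real" where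
  "mu_seq G M p 0 = p"
| "mu_seq G M p (Suc n) = vecmat (mu_seq G M p n) (Kmat G M (Suc n))"

end

theory Submission
  imports Defs
begin

text \<open>Write \<open>t m = \<theta> / m\<close> for \<open>m > M\<close> and \<open>t m = 0\<close> otherwise, so that
  \<open>K m = (1 - t m) I + t m Q\<close>. Expanding the product \<open>\<pi> K 1 \<dots> K n\<close> gives
  \<open>\<mu>\<^sup>n = \<Sum>k\<le>n. w n k \<pi> Q\<^sup>k\<close>, where \<open>w n k = mix_weight t n k\<close> is the coefficient of \<open>X\<^sup>k\<close> in
  \<open>\<Prod>m=1..n. (1 - t m + t m X)\<close>. These weights sum to 1, their absolute values have bounded
  sums because \<open>0 \<le> t m \<le> 1\<close> once \<open>m \<ge> \<theta>\<close>, and each \<open>w n k\<close> tends to 0 as \<open>n \<rightarrow> \<infinity>\<close>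
  because \<open>\<Sum> t m = \<infinity>\<close>. A Toeplitz summation argument then carries \<open>\<pi> Q\<^sup>k \<rightarrow> \<mu>\<close> over
  to \<open>\<mu>\<^sup>n\<close> and to \<open>\<mu>\<^sup>n Q\<close>.\<close>

definition stochastic_matrix :: "('a \<Rightarrow> 'a \<Rightarrow> real) \<Rightarrow> bool" where
  "stochastic_matrix A \<longleftrightarrow> (\<forall>i. prob_vector (A i))"

lemma prob_vector_le_1:
  assumes "prob_vector v"
  shows "v j \<le> 1"
proof -
  have "sum v {j} \<le> infsum v UNIV"
    using assms unfolding prob_vector_def by (intro finite_sum_le_infsum) auto
  then show ?thesis
    using assms unfolding prob_vector_def by simp
qed

lemma stochastic_matrix_abs_le_1:
  assumes "stochastic_matrix A"
  shows "\<bar>A i j\<bar> \<le> 1"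
  using assms prob_vector_le_1[of "A i" j] unfolding stochastic_matrix_def prob_vector_def by auto

lemma has_sum_sum:
  fixes f :: "'k \<Rightarrow> 'a \<Rightarrow> 'b::topological_comm_monoid_add"
  assumes "finite S" "\<And>k. k \<in> S \<Longrightarrow> (f k has_sum s k) A"
  shows "((\<lambda>i. \<Sum>k\<in>S. f k i) has_sum (\<Sum>k\<in>S. s k)) A"
  using assms by (induction S rule: finite_induct) (auto intro: has_sum_add)

lemma summable_on_vecmat:
  fixes v :: "'a \<Rightarrow> real"
  assumes "v summable_on UNIV" "\<And>i. \<bar>A i j\<bar> \<le> B"
  shows "(\<lambda>i. v i * A i j) summable_on UNIV"
proof -
  have "(\<lambda>i. norm (v i)) summable_on UNIV"
    using assms(1) summable_on_iff_abs_summable_on_real by blast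
  then have dominating: "(\<lambda>i. B * norm (v i)) summable_on UNIV"
    by (rule summable_on_cmult_right)
  have bound: "norm (v i * A i j) \<le> B * norm (v i)" for i
    using mult_right_mono[OF assms(2)[of i] abs_ge_zero[of "v i"]] by (simp add: abs_mult mult.commute)
  have "(\<lambda>i. norm (v i * A i j)) summable_on UNIV"
    by (rule Infinite_Sum.abs_summable_on_comparison_test'[OF dominating]) (rule bound)
  then show ?thesis
    using summable_on_iff_abs_summable_on_real by blast
qed

lemma vecmat_mat_id [simp]: "vecmat v mat_id = v"
proof
  fix j
  have "(\<Sum>\<^sub>\<infinity>i. v i * mat_id i j) = (\<Sum>\<^sub>\<infinity>i\<in>{j}. v i * mat_id i j)"
    by (rule infsum_cong_neutral) (auto simp: mat_id_def)
  then show "vecmat v mat_id j = v j"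
    by (simp add: vecmat_def mat_id_def)
qed

lemma vecmat_lincomb_right:
  assumes "(\<lambda>i. v i * A i j) summable_on UNIV" "(\<lambda>i. v i * B i j) summable_on UNIV"
  shows "vecmat v (\<lambda>i j. a * A i j + b * B i j) j = a * vecmat v A j + b * vecmat v B j"
proof -
  have "(\<Sum>\<^sub>\<infinity>i. v i * (a * A i j + b * B i j)) = (\<Sum>\<^sub>\<infinity>i. a * (v i * A i j) + b * (v i * B i j))"
    by (simp add: algebra_simps)
  also have "\<dots> = (\<Sum>\<^sub>\<infinity>i. a * (v i * A i j)) + (\<Sum>\<^sub>\<infinity>i. b * (v i * B i j))"
    by (intro infsum_add summable_on_cmult_right assms)
  finally show ?thesis
    by (simp add: vecmat_def infsum_cmult_right')
qed

lemma vecmat_sum_left: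
  fixes v :: "'k \<Rightarrow> 'a \<Rightarrow> real"
  assumes "finite S" "\<And>k. k \<in> S \<Longrightarrow> v k summable_on UNIV" "\<And>i. \<bar>A i j\<bar> \<le> B"
  shows "vecmat (\<lambda>i. \<Sum>k\<in>S. c k * v k i) A j = (\<Sum>k\<in>S. c k * vecmat (v k) A j)"
proof -
  have "((\<lambda>i. c k * (v k i * A i j)) has_sum c k * vecmat (v k) A j) UNIV" if "k \<in> S" for k
  proof -
    have "(\<lambda>i. v k i * A i j) summable_on UNIV"
      using assms(2)[OF that] assms(3) by (rule summable_on_vecmat)
    then show ?thesis
      unfolding vecmat_def summable_iff_has_sum_infsum by (rule has_sum_cmult_right)
  qed
  then have "((\<lambda>i. \<Sum>k\<in>S. c k * (v k i * A i j)) has_sum (\<Sum>k\<in>S. c k * vecmat (v k) A j)) UNIV"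
    using assms(1) by (rule has_sum_sum[rotated])
  also have "(\<lambda>i. \<Sum>k\<in>S. c k * (v k i * A i j)) = (\<lambda>i. (\<Sum>k\<in>S. c k * v k i) * A i j)"
    by (simp add: sum_distrib_right mult.assoc)
  finally show ?thesis
    unfolding vecmat_def by (rule infsumI)
qed

lemma has_sum_stochastic_row:
  assumes "stochastic_matrix A"
  shows "((\<lambda>j. c * A i j) has_sum c) UNIV"
proof -
  have "(A i has_sum 1) UNIV"
    using assms by (simp add: stochastic_matrix_def prob_vector_def has_sum_iff)
  then show ?thesis
    using has_sum_cmult_right[where c = c] by fastforce
qed

lemma summable_on_prob_vector_times_stochastic:
  assumes A: "stochastic_matrix A" and v: "prob_vector v"
  shows "(\<lambda>(i, j). v i * A i j) summable_on UNIV \<times> UNIV"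
proof -
  let ?f = "\<lambda>(i, j). v i * A i j"
  have v0: "0 \<le> v i" and A0: "0 \<le> A i j" for i j
    using A v by (auto simp: stochastic_matrix_def prob_vector_def)
  have norm_eq: "\<bar>v i * A i j\<bar> = v i * A i j" for i j
    by (simp add: v0 A0)
  have "(\<lambda>x. norm (?f x)) summable_on UNIV \<times> UNIV"
  proof (subst Infinite_Sum.abs_summable_on_Sigma_iff, intro conjI ballI)
    fix i :: 'a
    have "(\<lambda>j. norm (?f (i, j))) = (\<lambda>j. v i * A i j)"
      by (simp add: norm_eq)
    then show "(\<lambda>j. norm (?f (i, j))) summable_on UNIV"
      using has_sum_stochastic_row[OF A, of "v i" i] unfolding summable_on_def by metis
  next
    have "(\<lambda>i. norm (\<Sum>\<^sub>\<infinity>j. norm (?f (i, j)))) = v"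
      by (simp add: norm_eq infsumI[OF has_sum_stochastic_row[OF A]] v0)
    then show "(\<lambda>i. norm (\<Sum>\<^sub>\<infinity>j. norm (?f (i, j)))) summable_on UNIV"
      using v by (simp add: prob_vector_def)
  qed
  then show ?thesis
    using summable_on_iff_abs_summable_on_real by blast
qed

lemma prob_vector_vecmat:
  assumes A: "stochastic_matrix A" and v: "prob_vector v"
  shows "prob_vector (vecmat v A)"
proof -
  have S: "(\<lambda>(i, j). v i * A i j) summable_on UNIV \<times> UNIV"
    using A v by (rule summable_on_prob_vector_times_stochastic)
  then have "(\<lambda>(j, i). v i * A i j) summable_on UNIV \<times> UNIV"
    by (subst summable_on_swap) (simp add: case_prod_unfold)
  then have "(\<lambda>j. \<Sum>\<^sub>\<infinity>i. v i * A i j) summable_on UNIV"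
    using summable_on_Sigma_banach[of "\<lambda>j i. v i * A i j" UNIV "\<lambda>_. UNIV"] by simp
  moreover have "(\<Sum>\<^sub>\<infinity>j. \<Sum>\<^sub>\<infinity>i. v i * A i j) = 1"
    using infsum_swap_banach[OF S] v by (simp add: infsumI[OF has_sum_stochastic_row[OF A]] prob_vector_def)
  moreover have "0 \<le> (\<Sum>\<^sub>\<infinity>i. v i * A i j)" for j
    using A v by (intro infsum_nonneg) (auto simp: stochastic_matrix_def prob_vector_def)
  ultimately show ?thesis
    by (simp add: prob_vector_def vecmat_def)
qed

lemma contracting_recurrence_tendsto_0:
  fixes z s :: "nat \<Rightarrow> real"
  assumes z: "\<And>n. 0 \<le> z n" and s: "\<And>n. n \<ge> N \<Longrightarrow> 0 \<le> s n" and div: "\<not> summable s"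
    and rec: "\<And>n. n \<ge> N \<Longrightarrow> z (Suc n) \<le> (1 - s n) * z n"
  shows "z \<longlonglongrightarrow> 0"
proof -
  have "decseq (\<lambda>n. z (n + N))"
  proof (rule decseq_SucI)
    fix n
    have "0 \<le> s (n + N) * z (n + N)"
      using s z by simp
    then show "z (Suc n + N) \<le> z (n + N)"
      using rec[of "n + N"] by (simp add: algebra_simps)
  qed
  then obtain L where L: "(\<lambda>n. z (n + N)) \<longlonglongrightarrow> L" "\<And>i. L \<le> z (i + N)"
    using decseq_convergent[of "\<lambda>n. z (n + N)" 0] z by blast
  have "L \<le> 0"
  proof (rule ccontr)
    assume "\<not> L \<le> 0"
    have telescope: "L * (\<Sum>i<m. s (i + N)) \<le> z N - z (m + N)" for m
    proof (induction m)
      case (Suc m)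
      have "L * s (m + N) \<le> z (m + N) * s (m + N)"
        by (intro mult_right_mono L(2)) (use s in auto)
      with rec[of "m + N"] Suc show ?case
        by (simp add: algebra_simps)
    qed simp
    have "(\<Sum>i<m. s (i + N)) \<le> z N / L" for m
      using telescope[of m] z[of "m + N"] \<open>\<not> L \<le> 0\<close> by (simp add: pos_le_divide_eq mult.commute)
    then have "summable (\<lambda>i. s (i + N))"
      using s by (intro summableI_nonneg_bounded) auto
    then show False
      using div by simp
  qed
  moreover have "0 \<le> L"
    using L(1) z by (auto intro: LIMSEQ_le_const)
  ultimately show ?thesis
    using L(1) by (auto intro: LIMSEQ_offset)
qed

lemma perturbed_contracting_recurrence_tendsto_0:
  fixes x y s :: "nat \<Rightarrow> real"
  assumes x: "\<And>n. 0 \<le> x n" and s: "\<And>n. n \<ge> N \<Longrightarrow> 0 \<le> s n \<and> s n \<le> 1"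
    and div: "\<not> summable s"
    and rec: "\<And>n. n \<ge> N \<Longrightarrow> x (Suc n) \<le> (1 - s n) * x n + s n * y n"
    and y: "y \<longlonglongrightarrow> 0"
  shows "x \<longlonglongrightarrow> 0"
proof (rule LIMSEQ_I)
  fix r :: real
  assume "r > 0"
  then obtain N' where N': "\<And>n. n \<ge> N' \<Longrightarrow> \<bar>y n\<bar> < r / 2"
    using LIMSEQ_D[OF y, of "r / 2"] by auto
  \<comment> \<open>Once \<open>\<bar>y n\<bar> < r/2\<close>, the positive part of \<open>x n - r/2\<close> satisfies the unperturbed recurrence.\<close>
  define z where "z n = max (x n - r / 2) 0" for n
  have "z \<longlonglongrightarrow> 0"
  proof (rule contracting_recurrence_tendsto_0[where N = "max N N'"])
    fix n
    assume n: "max N N' \<le> n"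
    then have sn: "0 \<le> s n" "s n \<le> 1" and "y n \<le> r / 2"
      using s N' by fastforce+
    have "(1 - s n) * (x n - r / 2) + s n * (y n - r / 2) = (1 - s n) * x n + s n * y n - r / 2"
      by (simp add: field_simps)
    then have "x (Suc n) - r / 2 \<le> (1 - s n) * (x n - r / 2) + s n * (y n - r / 2)"
      using rec[of n] n by simp
    also have "\<dots> \<le> (1 - s n) * z n"
    proof -
      have "(1 - s n) * (x n - r / 2) \<le> (1 - s n) * z n"
        using sn by (intro mult_left_mono) (auto simp: z_def)
      moreover have "s n * (y n - r / 2) \<le> 0"
        using sn \<open>y n \<le> r / 2\<close> by (simp add: mult_nonneg_nonpos)
      ultimately show ?thesis
        by linarith
    qed
    finally show "z (Suc n) \<le> (1 - s n) * z n"
      using sn by (simp add: z_def)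
  qed (use s div in \<open>auto simp: z_def\<close>)
  then obtain n0 where n0: "\<And>n. n \<ge> n0 \<Longrightarrow> \<bar>z n\<bar> < r / 2"
    using LIMSEQ_D[of z 0 "r / 2"] \<open>r > 0\<close> by auto
  have x_le: "x n - r / 2 \<le> \<bar>z n\<bar>" for n
    unfolding z_def by (rule order_trans[OF max.cobounded1 abs_ge_self])
  show "\<exists>n0. \<forall>n\<ge>n0. norm (x n - 0) < r"
  proof (intro exI allI impI)
    fix n
    assume "n \<ge> n0"
    then show "norm (x n - 0) < r"
      using n0[of n] x_le[of n] x[of n] by simp
  qed
qed

lemma abs_weighted_sum_split_le:
  fixes w b :: "nat \<Rightarrow> real"
  assumes C: "\<And>k. \<bar>b k\<bar> \<le> C" and e: "\<And>k. k \<ge> K \<Longrightarrow> \<bar>b k\<bar> \<le> e"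
  shows "\<bar>\<Sum>k\<le>n. w k * b k\<bar> \<le> C * (\<Sum>k<K. \<bar>w k\<bar>) + e * (\<Sum>k\<le>n. \<bar>w k\<bar>)"
proof -
  have "0 \<le> C" "0 \<le> e"
    using C[of 0] e[of K] by linarith+
  have "\<bar>\<Sum>k\<le>n. w k * b k\<bar> \<le> (\<Sum>k\<le>n. \<bar>b k\<bar> * \<bar>w k\<bar>)"
    using sum_abs[of "\<lambda>k. w k * b k"] by (simp add: abs_mult mult.commute)
  also have "\<dots> \<le> (\<Sum>k\<le>n. C * (if k < K then \<bar>w k\<bar> else 0) + e * \<bar>w k\<bar>)"
  proof (rule sum_mono)
    fix k
    have "\<bar>b k\<bar> * \<bar>w k\<bar> \<le> C * \<bar>w k\<bar>"
      by (intro mult_right_mono C) simp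
    moreover have "\<bar>b k\<bar> * \<bar>w k\<bar> \<le> e * \<bar>w k\<bar>" if "\<not> k < K"
      using that by (intro mult_right_mono e) auto
    moreover have "0 \<le> e * \<bar>w k\<bar>"
      using \<open>0 \<le> e\<close> by simp
    ultimately show "\<bar>b k\<bar> * \<bar>w k\<bar> \<le> C * (if k < K then \<bar>w k\<bar> else 0) + e * \<bar>w k\<bar>"
      by auto
  qed
  also have "\<dots> = C * (\<Sum>k\<le>n. if k < K then \<bar>w k\<bar> else 0) + e * (\<Sum>k\<le>n. \<bar>w k\<bar>)"
    by (simp only: sum.distrib sum_distrib_left)
  also have "(\<Sum>k\<le>n. if k < K then \<bar>w k\<bar> else 0) = (\<Sum>k\<in>{..n} \<inter> {..<K}. \<bar>w k\<bar>)"
    by (simp add: sum.inter_restrict lessThan_def)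
  also have "C * (\<Sum>k\<in>{..n} \<inter> {..<K}. \<bar>w k\<bar>) + e * (\<Sum>k\<le>n. \<bar>w k\<bar>) \<le>
      C * (\<Sum>k<K. \<bar>w k\<bar>) + e * (\<Sum>k\<le>n. \<bar>w k\<bar>)"
    using \<open>0 \<le> C\<close> by (intro add_right_mono mult_left_mono sum_mono2) auto
  finally show ?thesis .
qed

lemma weighted_sum_tendsto:
  fixes w :: "nat \<Rightarrow> nat \<Rightarrow> real" and a :: "nat \<Rightarrow> real"
  assumes w_sum: "\<And>n. (\<Sum>k\<le>n. w n k) = 1"
    and w_abs: "\<And>n. (\<Sum>k\<le>n. \<bar>w n k\<bar>) \<le> B"
    and w_lim: "\<And>k. (\<lambda>n. w n k) \<longlonglongrightarrow> 0"
    and a: "a \<longlonglongrightarrow> L"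
  shows "(\<lambda>n. \<Sum>k\<le>n. w n k * a k) \<longlonglongrightarrow> L"
proof (rule LIMSEQ_I)
  fix r :: real
  assume "r > 0"
  have "(\<lambda>k. a k - L) \<longlonglongrightarrow> 0"
    using a by (simp add: LIM_zero)
  then obtain C where C: "\<And>k. \<bar>a k - L\<bar> \<le> C"
    using convergent_imp_Bseq[of "\<lambda>k. a k - L"] by (auto simp: convergent_def Bseq_def)
  have "0 \<le> B"
    using w_abs[of 0] sum_nonneg[of "{..0}" "\<lambda>k. \<bar>w 0 k\<bar>"] by simp
  define e where "e = r / (2 * (B + 1))"
  have "e > 0" "e * B < r / 2"
    using \<open>r > 0\<close> \<open>0 \<le> B\<close> by (simp_all add: e_def field_simps)
  obtain K where K: "\<And>k. k \<ge> K \<Longrightarrow> \<bar>a k - L\<bar> \<le> e"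
    using LIMSEQ_D[OF a \<open>e > 0\<close>] by (fastforce simp: dist_real_def)
  have "(\<lambda>n. C * (\<Sum>k<K. \<bar>w n k\<bar>)) \<longlonglongrightarrow> C * (\<Sum>k<K. \<bar>0\<bar>)"
    by (intro tendsto_intros w_lim)
  then obtain N where N: "\<And>n. n \<ge> N \<Longrightarrow> C * (\<Sum>k<K. \<bar>w n k\<bar>) < r / 2"
    using LIMSEQ_D[of _ 0 "r / 2"] \<open>r > 0\<close> by fastforce
  show "\<exists>N. \<forall>n\<ge>N. norm ((\<Sum>k\<le>n. w n k * a k) - L) < r"
  proof (intro exI allI impI)
    fix n
    assume "n \<ge> N"
    have "(\<Sum>k\<le>n. w n k * (a k - L)) = (\<Sum>k\<le>n. w n k * a k) - (\<Sum>k\<le>n. w n k) * L"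
      by (simp add: right_diff_distrib sum_subtractf sum_distrib_right)
    then have "(\<Sum>k\<le>n. w n k * a k) - L = (\<Sum>k\<le>n. w n k * (a k - L))"
      using w_sum[of n] by simp
    also have "\<bar>\<dots>\<bar> \<le> C * (\<Sum>k<K. \<bar>w n k\<bar>) + e * (\<Sum>k\<le>n. \<bar>w n k\<bar>)"
      using C K by (rule abs_weighted_sum_split_le)
    also have "\<dots> < r / 2 + r / 2"
      using N[OF \<open>n \<ge> N\<close>] w_abs[of n] \<open>e > 0\<close> \<open>e * B < r / 2\<close>
      by (smt (verit) mult_left_mono)
    finally show "norm ((\<Sum>k\<le>n. w n k * a k) - L) < r"
      by simp
  qed
qed

primrec mix_weight :: "(nat \<Rightarrow> real) \<Rightarrow> nat \<Rightarrow> nat \<Rightarrow> real" where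
  "mix_weight t 0 k = (if k = 0 then 1 else 0)"
| "mix_weight t (Suc n) k =
     (1 - t (Suc n)) * mix_weight t n k + t (Suc n) * (if k = 0 then 0 else mix_weight t n (k - 1))"

lemma mix_weight_eq_0: "n < k \<Longrightarrow> mix_weight t n k = 0"
  by (induction n arbitrary: k) auto

lemma sum_mix_weight_Suc:
  "(\<Sum>k\<le>Suc n. mix_weight t (Suc n) k * g k) =
     (1 - t (Suc n)) * (\<Sum>k\<le>n. mix_weight t n k * g k)
     + t (Suc n) * (\<Sum>k\<le>n. mix_weight t n k * g (Suc k))"
proof -
  have "(\<Sum>k\<le>Suc n. mix_weight t (Suc n) k * g k) =
      (\<Sum>k\<le>Suc n. (1 - t (Suc n)) * (mix_weight t n k * g k)
         + t (Suc n) * (if k = 0 then 0 else mix_weight t n (k - 1) * g k))"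
    by (rule sum.cong) (auto simp: algebra_simps)
  also have "\<dots> = (1 - t (Suc n)) * (\<Sum>k\<le>Suc n. mix_weight t n k * g k)
      + t (Suc n) * (\<Sum>k\<le>Suc n. if k = 0 then 0 else mix_weight t n (k - 1) * g k)"
    by (simp only: sum.distrib sum_distrib_left)
  also have "(\<Sum>k\<le>Suc n. mix_weight t n k * g k) = (\<Sum>k\<le>n. mix_weight t n k * g k)"
    by (simp add: mix_weight_eq_0)
  also have "(\<Sum>k\<le>Suc n. if k = 0 then 0 else mix_weight t n (k - 1) * g k) =
      (\<Sum>k\<le>n. mix_weight t n k * g (Suc k))"
    by (subst sum.atMost_Suc_shift) simp
  finally show ?thesis .
qed

lemma sum_mix_weight: "(\<Sum>k\<le>n. mix_weight t n k) = 1"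
  using sum_mix_weight_Suc[where g = "\<lambda>_. 1"] by (induction n) simp_all

lemma abs_mix_weight_Suc_le:
  assumes "0 \<le> t (Suc n)" "t (Suc n) \<le> 1"
  shows "\<bar>mix_weight t (Suc n) k\<bar> \<le>
    (1 - t (Suc n)) * \<bar>mix_weight t n k\<bar> + t (Suc n) * (if k = 0 then 0 else \<bar>mix_weight t n (k - 1)\<bar>)"
  using assms abs_triangle_ineq[of "(1 - t (Suc n)) * mix_weight t n k" "t (Suc n) * mix_weight t n (k - 1)"]
  by (cases "k = 0") (auto simp: abs_mult)

lemma sum_abs_mix_weight_Suc_le:
  assumes "0 \<le> t (Suc n)" "t (Suc n) \<le> 1"
  shows "(\<Sum>k\<le>Suc n. \<bar>mix_weight t (Suc n) k\<bar>) \<le> (\<Sum>k\<le>n. \<bar>mix_weight t n k\<bar>)"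
proof -
  have "(\<Sum>k\<le>Suc n. \<bar>mix_weight t (Suc n) k\<bar>) \<le>
      (\<Sum>k\<le>Suc n. (1 - t (Suc n)) * \<bar>mix_weight t n k\<bar>
         + t (Suc n) * (if k = 0 then 0 else \<bar>mix_weight t n (k - 1)\<bar>))"
    using assms by (intro sum_mono abs_mix_weight_Suc_le)
  also have "\<dots> = (1 - t (Suc n)) * (\<Sum>k\<le>Suc n. \<bar>mix_weight t n k\<bar>)
      + t (Suc n) * (\<Sum>k\<le>Suc n. if k = 0 then 0 else \<bar>mix_weight t n (k - 1)\<bar>)"
    by (simp only: sum.distrib sum_distrib_left)
  also have "(\<Sum>k\<le>Suc n. \<bar>mix_weight t n k\<bar>) = (\<Sum>k\<le>n. \<bar>mix_weight t n k\<bar>)"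
    by (simp add: mix_weight_eq_0)
  also have "(\<Sum>k\<le>Suc n. if k = 0 then 0 else \<bar>mix_weight t n (k - 1)\<bar>) =
      (\<Sum>k\<le>n. \<bar>mix_weight t n k\<bar>)"
    by (subst sum.atMost_Suc_shift) simp
  finally show ?thesis
    by (simp add: algebra_simps)
qed

lemma bounded_sum_abs_mix_weight:
  assumes t: "\<And>m. m > N \<Longrightarrow> 0 \<le> t m \<and> t m \<le> 1"
  shows "\<exists>B. \<forall>n. (\<Sum>k\<le>n. \<bar>mix_weight t n k\<bar>) \<le> B"
proof -
  define B where "B = Max ((\<lambda>m. \<Sum>k\<le>m. \<bar>mix_weight t m k\<bar>) ` {..N})"
  have "(\<Sum>k\<le>n. \<bar>mix_weight t n k\<bar>) \<le> B" for n
  proof (induction n)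
    case (Suc n)
    show ?case
    proof (cases "Suc n \<le> N")
      case False
      then show ?thesis
        using Suc t[of "Suc n"] sum_abs_mix_weight_Suc_le[of t n] by fastforce
    qed (unfold B_def, intro Max_ge finite_imageI imageI, simp_all)
  qed (unfold B_def, intro Max_ge finite_imageI imageI, simp_all)
  then show ?thesis
    by blast
qed

lemma mix_weight_tendsto_0:
  assumes t: "\<And>m. m > N \<Longrightarrow> 0 \<le> t m \<and> t m \<le> 1" and div: "\<not> summable t"
  shows "(\<lambda>n. mix_weight t n k) \<longlonglongrightarrow> 0"
proof -
  have s: "0 \<le> t (Suc n) \<and> t (Suc n) \<le> 1" if "N \<le> n" for n
    using t that by simp
  have div': "\<not> summable (\<lambda>n. t (Suc n))"
    using div by (simp add: summable_Suc_iff)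
  have rec: "\<bar>mix_weight t (Suc n) k\<bar> \<le> (1 - t (Suc n)) * \<bar>mix_weight t n k\<bar>
      + t (Suc n) * (if k = 0 then 0 else \<bar>mix_weight t n (k - 1)\<bar>)" if "N \<le> n" for n k
    using s[OF that] by (intro abs_mix_weight_Suc_le) auto
  have "(\<lambda>n. \<bar>mix_weight t n k\<bar>) \<longlonglongrightarrow> 0"
  proof (induction k)
    case 0
    show ?case
      by (rule perturbed_contracting_recurrence_tendsto_0[where y = "\<lambda>_. 0", OF _ s div'])
        (use rec[of _ 0] in simp_all)
  next
    case (Suc k)
    show ?case
      by (rule perturbed_contracting_recurrence_tendsto_0[where y = "\<lambda>n. \<bar>mix_weight t n k\<bar>", OF _ s div'])
        (use rec[of _ "Suc k"] Suc in simp_all)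
  qed
  then show ?thesis
    by (simp add: tendsto_rabs_zero_iff)
qed

lemma stochastic_matrix_of_generator:
  assumes gen: "generator_matrix G" and nonneg: "entrywise_nonneg (\<lambda>i j. mat_id i j + G i j / \<theta>)"
  shows "stochastic_matrix (\<lambda>i j. mat_id i j + G i j / \<theta>)"
  unfolding stochastic_matrix_def prob_vector_def
proof (intro allI conjI)
  fix i
  let ?Q = "\<lambda>j. mat_id i j + G i j / \<theta>"
  have sG: "(\<lambda>j. G i j) summable_on UNIV - {i}" and eG: "G i i = - (\<Sum>\<^sub>\<infinity>j\<in>UNIV - {i}. G i j)"
    using gen by (auto simp: generator_matrix_def)
  have off_diag: "?Q j = G i j / \<theta>" if "j \<in> UNIV - {i}" for j
    using that by (simp add: mat_id_def)
  have "((\<lambda>j. G i j / \<theta>) has_sum (\<Sum>\<^sub>\<infinity>j\<in>UNIV - {i}. G i j) / \<theta>) (UNIV - {i})"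
    using sG by (intro has_sum_divide_const) (simp add: summable_iff_has_sum_infsum)
  then have "(?Q has_sum (\<Sum>\<^sub>\<infinity>j\<in>UNIV - {i}. G i j) / \<theta>) (UNIV - {i})"
    using has_sum_cong[of "UNIV - {i}" ?Q "\<lambda>j. G i j / \<theta>"] off_diag by blast
  then have "(?Q has_sum ?Q i + (\<Sum>\<^sub>\<infinity>j\<in>UNIV - {i}. G i j) / \<theta>) (insert i (UNIV - {i}))"
    by (rule has_sum_insert[rotated]) simp
  moreover have "?Q i + (\<Sum>\<^sub>\<infinity>j\<in>UNIV - {i}. G i j) / \<theta> = 1"
    by (simp add: mat_id_def eG)
  ultimately have "(?Q has_sum 1) UNIV"
    by simp
  then show "?Q summable_on UNIV" "(\<Sum>\<^sub>\<infinity>j. ?Q j) = 1"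
    by (auto simp: has_sum_iff)
  show "0 \<le> ?Q j" for j
    using nonneg by (simp add: entrywise_nonneg_def)
qed

lemma Kmat_eq_mix:
  assumes "\<theta> \<noteq> 0"
  shows "Kmat G M m = (\<lambda>i j. (1 - (if M < m then \<theta> / real m else 0)) * mat_id i j
      + (if M < m then \<theta> / real m else 0) * (mat_id i j + G i j / \<theta>))"
proof (intro ext)
  fix i j
  show "Kmat G M m i j = (1 - (if M < m then \<theta> / real m else 0)) * mat_id i j
      + (if M < m then \<theta> / real m else 0) * (mat_id i j + G i j / \<theta>)"
  proof (cases "M < m")
    case True
    then have "real m > 0"
      by simp
    with True assms show ?thesis
      by (simp add: Kmat_def field_simps)
  qed (simp add: Kmat_def)
qed

lemma vecmat_mix:
  assumes "v summable_on UNIV" "stochastic_matrix Q"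
  shows "vecmat v (\<lambda>i j. (1 - c) * mat_id i j + c * Q i j) j = (1 - c) * v j + c * vecmat v Q j"
proof -
  have "(\<lambda>i. v i * mat_id i j) summable_on UNIV" "(\<lambda>i. v i * Q i j) summable_on UNIV"
    using assms stochastic_matrix_abs_le_1 by (auto intro!: summable_on_vecmat[where B = 1] simp: mat_id_def)
  then show ?thesis
    by (simp add: vecmat_lincomb_right)
qed

lemma prob_vector_funpow_vecmat:
  "stochastic_matrix Q \<Longrightarrow> prob_vector p \<Longrightarrow> prob_vector (((\<lambda>v. vecmat v Q) ^^ k) p)"
  by (induction k) (simp_all add: prob_vector_vecmat)

lemma vecmat_sum_funpow_vecmat:
  assumes Q: "stochastic_matrix Q" and p: "prob_vector p" and S: "finite S"
  shows "vecmat (\<lambda>i. \<Sum>k\<in>S. c k * ((\<lambda>v. vecmat v Q) ^^ k) p i) Q j =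
    (\<Sum>k\<in>S. c k * ((\<lambda>v. vecmat v Q) ^^ Suc k) p j)"
  using prob_vector_funpow_vecmat[OF Q p] stochastic_matrix_abs_le_1[OF Q]
  by (subst vecmat_sum_left[OF S, where B = 1]) (auto simp: prob_vector_def)

lemma mu_seq_eq_mix_weight_sum:
  assumes Q: "stochastic_matrix Q" and p: "prob_vector p"
    and K: "\<And>m. Kmat G M m = (\<lambda>i j. (1 - t m) * mat_id i j + t m * Q i j)"
  shows "mu_seq G M p n j = (\<Sum>k\<le>n. mix_weight t n k * ((\<lambda>v. vecmat v Q) ^^ k) p j)"
proof (induction n arbitrary: j)
  case (Suc n)
  let ?P = "\<lambda>k. ((\<lambda>v. vecmat v Q) ^^ k) p"
  let ?v = "\<lambda>i. \<Sum>k\<le>n. mix_weight t n k * ?P k i"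
  have "((\<lambda>i. \<Sum>k\<le>n. mix_weight t n k * ?P k i) has_sum (\<Sum>k\<le>n. mix_weight t n k * 1)) UNIV"
    using prob_vector_funpow_vecmat[OF Q p]
    by (intro has_sum_sum has_sum_cmult_right) (auto simp: prob_vector_def has_sum_iff)
  then have "?v summable_on UNIV"
    by (auto simp: summable_on_def)
  moreover have "mu_seq G M p n = ?v"
    using Suc.IH by (rule ext)
  ultimately have "mu_seq G M p (Suc n) j = (1 - t (Suc n)) * ?v j + t (Suc n) * vecmat ?v Q j"
    by (simp add: K vecmat_mix[OF _ Q] del: funpow.simps)
  also have "vecmat ?v Q j = (\<Sum>k\<le>n. mix_weight t n k * ?P (Suc k) j)"
    by (rule vecmat_sum_funpow_vecmat[OF Q p]) simp
  finally show ?case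
    by (simp only: sum_mix_weight_Suc)
qed simp

lemma not_summable_harmonic_tail:
  assumes "\<theta> \<noteq> 0"
  shows "\<not> summable (\<lambda>m. if M < m then \<theta> / real m else 0)"
proof
  assume "summable (\<lambda>m. if M < m then \<theta> / real m else 0)"
  then have "summable (\<lambda>i. \<theta> / real (i + Suc M))"
    using summable_iff_shift[of "\<lambda>m. if M < m then \<theta> / real m else 0" "Suc M"] by simp
  then have "summable (\<lambda>i. inverse \<theta> * (\<theta> / real (i + Suc M)))"
    by (rule summable_mult)
  then have "summable (\<lambda>i. inverse (real (i + Suc M)))"
    using assms by (simp add: field_simps)
  then have "summable (\<lambda>i. inverse (real i))"
    by (rule summable_iff_shift[THEN iffD1])
  then show False
    using not_summable_harmonic by blast
qed

theorem mainTheorem14: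
  fixes G :: "'a \<Rightarrow> 'a \<Rightarrow> real" and \<theta> :: real and M :: nat
    and \<pi> \<mu> :: "'a \<Rightarrow> real"
  defines "Q \<equiv> (\<lambda>i j. mat_id i j + G i j / \<theta>)"
  assumes gen: "generator_matrix G"
    and theta_pos: "\<theta> > 0"
    and M_ge: "M \<ge> 1"
    and Q_nonneg: "entrywise_nonneg Q"
    and M_nonneg: "entrywise_nonneg (\<lambda>i j. mat_id i j + G i j / real M)"
    and pi_prob: "prob_vector \<pi>"
    and mu_prob: "prob_vector \<mu>"
    and mu_stat: "vecmat \<mu> Q = \<mu>"
    and conv: "\<forall>j. (\<lambda>n. ((\<lambda>v. vecmat v Q) ^^ n) \<pi> j) \<longlonglongrightarrow> \<mu> j"
  shows "(\<forall>j. (\<lambda>n. mu_seq G M \<pi> n j) \<longlonglongrightarrow> \<mu> j) \<and>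
         (\<forall>j. (\<lambda>n. vecmat (mu_seq G M \<pi> n) Q j) \<longlonglongrightarrow> \<mu> j)"
proof -
  define t where "t m = (if M < m then \<theta> / real m else 0)" for m
  define P where "P k = ((\<lambda>v. vecmat v Q) ^^ k) \<pi>" for k
  have Q: "stochastic_matrix Q"
    using stochastic_matrix_of_generator[OF gen] Q_nonneg unfolding Q_def .
  have K: "Kmat G M m = (\<lambda>i j. (1 - t m) * mat_id i j + t m * Q i j)" for m
    using Kmat_eq_mix[of \<theta> G M m] theta_pos unfolding t_def Q_def by simp
  have mu_seq: "mu_seq G M \<pi> n = (\<lambda>j. \<Sum>k\<le>n. mix_weight t n k * P k j)" for n
    using mu_seq_eq_mix_weight_sum[OF Q pi_prob K] unfolding P_def by (rule ext)
  have mu_seq_Q: "vecmat (\<lambda>i. \<Sum>k\<le>n. mix_weight t n k * P k i) Q j =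
      (\<Sum>k\<le>n. mix_weight t n k * P (Suc k) j)" for n j
    unfolding P_def by (rule vecmat_sum_funpow_vecmat[OF Q pi_prob]) simp
  have t: "0 \<le> t m \<and> t m \<le> 1" if "m > max M (nat \<lceil>\<theta>\<rceil>)" for m
  proof -
    have "M < m" "\<theta> \<le> real m"
      using that real_nat_ceiling_ge[of \<theta>] by auto
    then show ?thesis
      using theta_pos by (simp add: t_def)
  qed
  obtain B where B: "\<And>n. (\<Sum>k\<le>n. \<bar>mix_weight t n k\<bar>) \<le> B"
    using bounded_sum_abs_mix_weight[of "max M (nat \<lceil>\<theta>\<rceil>)" t] t by blast
  have "\<not> summable t"
    using not_summable_harmonic_tail[of \<theta> M] theta_pos unfolding t_def by simp
  then have w: "(\<lambda>n. mix_weight t n k) \<longlonglongrightarrow> 0" for k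
    using mix_weight_tendsto_0[of "max M (nat \<lceil>\<theta>\<rceil>)" t] t by blast
  have P: "(\<lambda>k. P k j) \<longlonglongrightarrow> \<mu> j" for j
    using conv unfolding P_def by blast
  show ?thesis
    unfolding mu_seq mu_seq_Q
    using weighted_sum_tendsto[OF sum_mix_weight B w P]
      weighted_sum_tendsto[OF sum_mix_weight B w LIMSEQ_Suc[OF P]]
    by blast
qed

end
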